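(* Let $\boldsymbol{h}_1,\dots,\boldsymbol{h}_K\in\mathbb{C}^{N_t\times1}$, $\Gamma\ge0$, $P>0$, and let $\lambda\ge0$, $\mu_1,\dots,\mu_K\ge0$ be such that $\boldsymbol{A}(\lambda,\{\mu_k\}):=\lambda\boldsymbol{I}-\sum_{k=1}^K\mu_k\boldsymbol{h}_k\boldsymbol{h}_k^H\succeq\boldsymbol{0}$. Let $N=\mathrm{rank}(\boldsymbol{A}(\lambda,\{\mu_k\}))\le N_t$ and let $\boldsymbol{A}(\lambda,\{\mu_k\})=\boldsymbol{U}\boldsymbol{\Lambda}\boldsymbol{U}^H$ be an eigenvalue decomposition with $\boldsymbol{U}$ unitary and $\boldsymbol{\Lambda}=\mathrm{diag}(\alpha_1,\dots,\alpha_{N_t})$, $\alpha_1\ge\dots\ge\alpha_{N_t}$ (so $\alpha_i>0$ for $i\le N$ and $\alpha_i=0$ for $i>N$). Consider the problem of minimizing over $\boldsymbol{S}_x\succeq\boldsymbol{0}$ the function $$\mathcal{L}(\boldsymbol{S}_x,\lambda,\{\mu_k\}) = \mathrm{tr}(\boldsymbol{S}_x^{-1}) + \Gamma\sum_{k=1}^K\mu_k + \mathrm{tr}\big(\boldsymbol{A}(\lambda,\{\mu_k\})\boldsymbol{S}_x\big) - \lambda P,$$ with $\mathrm{tr}(\boldsymbol{S}_x^{-1})=+\infty$ for singular $\boldsymbol{S}_x$. Then the optimal solution is $\boldsymbol{S}_x^{*}=\boldsymbol{U}\boldsymbol{\Sigma}\boldsymbol{U}^H$ with $\boldsymbol{\Sigma}=\mathrm{diag}(\tau_1,\dots,\tau_{N_t})$,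 where $\tau_i=\alpha_i^{-1/2}$ for $i\le N$ and $\tau_i\to+\infty$ for $N<i\le N_t$. Precisely: if $N=N_t$, then $\boldsymbol{U}\,\mathrm{diag}(\alpha_1^{-1/2},\dots,\alpha_{N_t}^{-1/2})\,\boldsymbol{U}^H$ minimizes $\mathcal{L}(\cdot,\lambda,\{\mu_k\})$ over $\boldsymbol{S}_x\succeq\boldsymbol{0}$; and in general, $\inf_{\boldsymbol{S}_x\succeq\boldsymbol{0}}\mathcal{L}(\boldsymbol{S}_x,\lambda,\{\mu_k\}) = \lim_{t\to+\infty}\mathcal{L}\big(\boldsymbol{U}\,\mathrm{diag}(\alpha_1^{-1/2},\dots,\alpha_N^{-1/2},t,\dots,t)\,\boldsymbol{U}^H,\lambda,\{\mu_k\}\big)$.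
   Context: $\boldsymbol{S}\succeq\boldsymbol{0}$ denotes Hermitian positive semidefinite; $(\cdot)^H$ is conjugate transpose; $\boldsymbol{I}$ is the $N_t\times N_t$ identity. *)

theory Defs
  imports "HOL-Analysis.Analysis"
begin

definition adj :: "complex^'n^'n \<Rightarrow> complex^'n^'n" where
  "adj M = (\<chi> i j. cnj (M $ j $ i))"

definition psd :: "complex^'n^'n \<Rightarrow> bool" where
  "psd S \<longleftrightarrow> adj S = S \<and> (\<forall>x::complex^'n. 0 \<le> Re (\<Sum>i\<in>UNIV. cnj (x $ i) * (S *v x) $ i))"

definition unitary :: "complex^'n^'n \<Rightarrow> bool" where
  "unitary U \<longleftrightarrow> adj U ** U = mat 1"

definition diagm :: "('n \<Rightarrow> real) \<Rightarrow> complex^'n^'n" where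
  "diagm d = (\<chi> i j. if i = j then complex_of_real (d i) else 0)"

definition outer :: "complex^'n \<Rightarrow> complex^'n^'n" where
  "outer h = (\<chi> i j. h $ i * cnj (h $ j))"

definition Amat :: "(nat \<Rightarrow> complex^'n) \<Rightarrow> nat \<Rightarrow> real \<Rightarrow> (nat \<Rightarrow> real) \<Rightarrow> complex^'n^'n" where
  "Amat h K lam mu = lam *\<^sub>R mat 1 - (\<Sum>k<K. mu k *\<^sub>R outer (h k))"

text \<open>The Lagrangian; tr(S^{-1}) = +infinity for singular S. Traces are real here
  (products of Hermitian PSD matrices), so we take real parts.\<close>
definition Lag :: "(nat \<Rightarrow> complex^'n) \<Rightarrow> nat \<Rightarrow> real \<Rightarrow> real \<Rightarrow> real \<Rightarrow> (nat \<Rightarrow> real)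
    \<Rightarrow> complex^'n^'n \<Rightarrow> ereal" where
  "Lag h K Gam P lam mu S =
     (if invertible S then
        ereal (Re (trace (matrix_inv S)) + Gam * (\<Sum>k<K. mu k)
               + Re (trace (Amat h K lam mu ** S)) - lam * P)
      else \<infinity>)"

text \<open>0-based position of an index in the well-order of the index type.\<close>
definition pos :: "'n::{finite,wellorder} \<Rightarrow> nat" where
  "pos i = card {j. j < i}"

end

theory Submission
  imports Defs
begin

(* Let B = U diag(sqrt alpha) U^H, so that B is Hermitian and B^2 = A. For an invertible
   S >= 0 the matrix (S^-1 - B)^H S (S^-1 - B) = S^-1 - 2B + BSB is positive semidefinite,
   hence tr(S^-1) + tr(AS) >= 2 tr B = 2 (sum of sqrt alpha_i), a lower bound on the
   Lagrangian. The matrices U diag(tau) U^H, with tau_i = alpha_i^(-1/2) on the N positive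
   eigenvalues and tau_i = t on the zero ones, exceed this bound by exactly (N_t - N)/t. *)

lemma adj_mult: "adj (X ** Y) = adj Y ** adj (X::complex^'n^'n)"
  by (simp add: adj_def matrix_matrix_mult_def vec_eq_iff mult.commute)

lemma adj_diff: "adj (X - Y) = adj X - adj (Y::complex^'n^'n)"
  by (simp add: adj_def vec_eq_iff)

lemma adj_adj [simp]: "adj (adj X) = X"
  by (simp add: adj_def vec_eq_iff)

lemma adj_mat_1 [simp]: "adj (mat 1 :: complex^'n^'n) = mat 1"
  by (simp add: adj_def mat_def vec_eq_iff)

lemma adj_diagm [simp]: "adj (diagm d) = diagm d"
  by (simp add: adj_def diagm_def vec_eq_iff)

lemma matrix_diff_ldistrib: "(A::'a::comm_ring_1^'n^'m) ** (B - C) = A ** B - A ** C"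
  by (simp add: matrix_matrix_mult_def vec_eq_iff right_diff_distrib sum_subtractf)

lemma matrix_diff_rdistrib: "((A::'a::comm_ring_1^'n^'m) - B) ** C = A ** C - B ** C"
  by (simp add: matrix_matrix_mult_def vec_eq_iff left_diff_distrib sum_subtractf)

lemma diagm_mult: "diagm d ** diagm e = (diagm (\<lambda>i. d i * e i) :: complex^'n^'n)"
  unfolding diagm_def matrix_matrix_mult_def
  by (simp add: vec_eq_iff if_distrib[of "\<lambda>x. x * _"] if_distrib[of "\<lambda>x. _ * x"] cong: if_cong)

lemma diagm_1: "diagm (\<lambda>_. 1) = (mat 1 :: complex^'n^'n)"
  by (simp add: diagm_def mat_def vec_eq_iff)

lemma diagm_mult_vec: "diagm d *v y = (\<chi> i. complex_of_real (d i) * y $ i)"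
  unfolding diagm_def matrix_vector_mult_def
  by (simp add: vec_eq_iff if_distrib[of "\<lambda>x. x * _"] cong: if_cong)

lemma trace_diagm: "trace (diagm d :: complex^'n^'n) = complex_of_real (\<Sum>i\<in>UNIV. d i)"
  by (simp add: diagm_def trace_def)

lemma unitary_right_inverse: "unitary U \<Longrightarrow> U ** adj U = mat 1"
  by (simp add: unitary_def matrix_left_right_inverse)

lemma unitary_conj_mult:
  assumes "unitary U"
  shows "(U ** X ** adj U) ** (U ** Y ** adj U) = U ** (X ** Y) ** adj (U::complex^'n^'n)"
proof -
  have "(U ** X ** adj U) ** (U ** Y ** adj U) = U ** X ** (adj U ** U) ** Y ** adj U"
    by (simp add: matrix_mul_assoc)
  then show ?thesis
    using assms[unfolded unitary_def] by (simp add: matrix_mul_assoc)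
qed

lemma trace_unitary_conj:
  assumes "unitary U"
  shows "trace (U ** X ** adj U) = trace (X::complex^'n^'n)"
proof -
  have "trace ((U ** X) ** adj U) = trace (adj U ** (U ** X))"
    by (rule trace_mul_sym)
  then show ?thesis
    using assms by (simp add: unitary_def matrix_mul_assoc)
qed

lemma adj_unitary_conj_diagm: "adj (U ** diagm d ** adj U) = U ** diagm d ** adj U"
  by (simp add: adj_mult matrix_mul_assoc)

lemma unitary_conj_diagm_inverse:
  assumes "unitary U" and "\<forall>i. d i \<noteq> 0"
  shows "U ** diagm d ** adj U ** (U ** diagm (\<lambda>i. 1 / d i) ** adj U) = (mat 1 :: complex^'n^'n)"
proof -
  have "(\<lambda>i. d i * (1 / d i)) = (\<lambda>_. 1)"
    using assms(2) by (auto simp: fun_eq_iff)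
  then show ?thesis
    unfolding unitary_conj_mult[OF assms(1)] diagm_mult
    by (simp add: diagm_1 unitary_right_inverse[OF assms(1)])
qed

lemma matrix_inv_mult:
  assumes "invertible (S::'a::field^'n^'n)"
  shows "S ** matrix_inv S = mat 1" and "matrix_inv S ** S = mat 1"
  using someI_ex[OF assms[unfolded invertible_def]] by (simp_all add: matrix_inv_def)

lemma matrix_inv_unique:
  fixes A B :: "'a::field^'n^'n"
  assumes AB: "A ** B = mat 1"
  shows "invertible A" and "matrix_inv A = B"
proof -
  show inv: "invertible A"
    using AB by (simp add: invertible_right_inverse) blast
  have "matrix_inv A = matrix_inv A ** (A ** B)"
    using AB by simp
  also have "\<dots> = B"
    by (simp add: matrix_mul_assoc matrix_inv_mult[OF inv])
  finally show "matrix_inv A = B" .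
qed

lemma adj_matrix_inv:
  assumes "invertible (S::complex^'n^'n)"
  shows "adj (matrix_inv S) = matrix_inv (adj S)"
proof -
  have "adj S ** adj (matrix_inv S) = mat 1"
    by (simp flip: adj_mult add: matrix_inv_mult[OF assms])
  then show ?thesis
    by (rule matrix_inv_unique(2)[symmetric])
qed

definition quad_form :: "complex^'n^'n \<Rightarrow> complex^'n \<Rightarrow> complex" where
  "quad_form S x = (\<Sum>i\<in>UNIV. cnj (x $ i) * (S *v x) $ i)"

lemma psd_iff_quad_form: "psd S \<longleftrightarrow> adj S = S \<and> (\<forall>x. 0 \<le> Re (quad_form S x))"
  by (simp add: psd_def quad_form_def)

lemma sum_cnj_mult_matrix_vector:
  "(\<Sum>i\<in>UNIV. cnj (x $ i) * (M *v z) $ i) = (\<Sum>j\<in>UNIV. cnj ((adj M *v x) $ j) * z $ j)"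
proof -
  have "(\<Sum>i\<in>UNIV. cnj (x $ i) * (M *v z) $ i)
      = (\<Sum>i\<in>UNIV. \<Sum>j\<in>UNIV. cnj (x $ i) * M $ i $ j * z $ j)"
    by (simp add: matrix_vector_mult_def sum_distrib_left mult.assoc)
  also have "\<dots> = (\<Sum>j\<in>UNIV. \<Sum>i\<in>UNIV. cnj (x $ i) * M $ i $ j * z $ j)"
    by (rule sum.swap)
  also have "\<dots> = (\<Sum>j\<in>UNIV. cnj ((adj M *v x) $ j) * z $ j)"
    by (simp add: matrix_vector_mult_def adj_def sum_distrib_left sum_distrib_right mult_ac)
  finally show ?thesis .
qed

lemma quad_form_unitary_conj:
  assumes "unitary U"
  shows "quad_form (U ** D ** adj U) (U *v y) = quad_form D (y::complex^'n)"
proof -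
  have "(U ** D ** adj U) *v (U *v y) = U *v (D *v y)"
    using assms by (simp add: unitary_def matrix_vector_mul_assoc flip: matrix_mul_assoc)
  then have "quad_form (U ** D ** adj U) (U *v y)
      = (\<Sum>j\<in>UNIV. cnj ((adj U *v (U *v y)) $ j) * (D *v y) $ j)"
    by (simp add: quad_form_def sum_cnj_mult_matrix_vector)
  then show ?thesis
    using assms by (simp add: quad_form_def unitary_def matrix_vector_mul_assoc)
qed

lemma Re_quad_form_diagm: "Re (quad_form (diagm d) y) = (\<Sum>i\<in>UNIV. d i * (cmod (y $ i))\<^sup>2)"
  by (simp add: quad_form_def diagm_mult_vec cmod_def power2_eq_square algebra_simps)

lemma psd_unitary_conj_diagm_iff:
  assumes "unitary U"
  shows "psd (U ** diagm d ** adj U) \<longleftrightarrow> (\<forall>i. 0 \<le> d i)"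
proof -
  have "psd (U ** diagm d ** adj U) \<longleftrightarrow> (\<forall>y. 0 \<le> Re (quad_form (diagm d) y))"
    unfolding psd_iff_quad_form adj_unitary_conj_diagm
    by (metis assms quad_form_unitary_conj unitary_right_inverse matrix_vector_mul_assoc
        matrix_vector_mul_lid)
  also have "\<dots> \<longleftrightarrow> (\<forall>i. 0 \<le> d i)"
  proof
    assume "\<forall>y. 0 \<le> Re (quad_form (diagm d) y)"
    then have "0 \<le> Re (quad_form (diagm d) (axis i 1))" for i
      by blast
    then show "\<forall>i. 0 \<le> d i"
      by (simp add: Re_quad_form_diagm axis_def if_distrib if_distribR cong: if_cong)
  qed (simp add: Re_quad_form_diagm sum_nonneg)
  finally show ?thesis .
qed

lemma trace_adj_mult_psd_nonneg:
  assumes "psd S"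
  shows "0 \<le> Re (trace (adj M ** S ** (M::complex^'n^'n)))"
proof -
  have "trace (adj M ** (S ** M)) = (\<Sum>j\<in>UNIV. quad_form S (column j M))"
    by (simp add: trace_def quad_form_def matrix_matrix_mult_def matrix_vector_mult_def
        adj_def column_def)
  then show ?thesis
    using assms by (simp add: psd_iff_quad_form sum_nonneg matrix_mul_assoc)
qed

lemma two_trace_le_trace_inverse_plus:
  fixes B S :: "complex^'n^'n"
  assumes "adj B = B" and "psd S" and "invertible S"
  shows "2 * Re (trace B) \<le> Re (trace (matrix_inv S)) + Re (trace (B ** B ** S))"
proof -
  define Si where "Si = matrix_inv S"
  have S_Si: "S ** Si = mat 1" and Si_S: "Si ** S = mat 1"
    using matrix_inv_mult[OF assms(3)] by (simp_all add: Si_def)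
  have "adj S = S"
    using assms(2) by (simp add: psd_def)
  then have adj_Si: "adj Si = Si"
    by (simp add: Si_def adj_matrix_inv[OF assms(3)])
  have "(Si - B) ** S = mat 1 - B ** S"
    by (simp add: matrix_diff_rdistrib Si_S)
  then have "adj (Si - B) ** S ** (Si - B) = (mat 1 - B ** S) ** (Si - B)"
    by (simp add: adj_diff adj_Si assms(1))
  also have "\<dots> = Si - B - (B ** S ** Si - B ** S ** B)"
    by (simp add: matrix_diff_ldistrib matrix_diff_rdistrib)
  also have "B ** S ** Si = B"
    by (simp add: S_Si flip: matrix_mul_assoc)
  finally have expand: "adj (Si - B) ** S ** (Si - B) = Si - B - (B - B ** S ** B)" .
  have cycle: "trace (B ** S ** B) = trace (B ** B ** S)"
    by (metis trace_mul_sym matrix_mul_assoc)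
  have "trace (adj (Si - B) ** S ** (Si - B)) = trace Si - trace B - (trace B - trace (B ** B ** S))"
    unfolding expand trace_sub cycle ..
  then show ?thesis
    using trace_adj_mult_psd_nonneg[OF assms(2), of "Si - B"] by (simp add: Si_def)
qed

lemma rank_mult_le_right: "rank ((X::'a::field^'m^'k) ** (Y::'a^'n^'m)) \<le> rank Y"
  unfolding row_rank_def_gen
proof (rule vec.dim_mono)
  show "rows (X ** Y) \<subseteq> vec.span (rows Y)"
  proof
    fix v assume "v \<in> rows (X ** Y)"
    then obtain i where v: "v = (\<Sum>k\<in>UNIV. X $ i $ k *s row k Y)"
      by (auto simp: rows_def row_def matrix_matrix_mult_def vec_eq_iff sum_component)
    have "row k Y \<in> vec.span (rows Y)" for k
      by (rule vec.span_base) (auto simp: rows_def)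
    then show "v \<in> vec.span (rows Y)"
      unfolding v by (intro vec.span_sum vec.span_scale)
  qed
qed

lemma rank_mult_left_invertible:
  assumes "V ** U = mat 1"
  shows "rank (U ** (X::'a::field^'n^'m)) = rank X"
proof (rule antisym)
  show "rank (U ** X) \<le> rank X"
    by (rule rank_mult_le_right)
  have "rank X = rank (V ** (U ** X))"
    using assms by (simp add: matrix_mul_assoc)
  also have "\<dots> \<le> rank (U ** X)"
    by (rule rank_mult_le_right)
  finally show "rank X \<le> rank (U ** X)" .
qed

lemma rank_mult_right_invertible:
  assumes WV: "W ** V = mat 1"
  shows "rank ((X::'a::field^'n^'m) ** W) = rank X"
proof -
  have "rows (X ** W) = (\<lambda>v. transpose W *v v) ` rows X"
    by (auto simp: rows_def row_def vector_matrix_mult_def matrix_matrix_mult_def vec_eq_iff)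
  moreover have "vec.dim ((\<lambda>v. transpose W *v v) ` rows X) = vec.dim (rows X)"
  proof (rule vec.dim_image_eq)
    show "Vector_Spaces.linear (*s) (*s) ((*v) (transpose W))"
      by (rule matrix_vector_mul_linear_gen)
    show "inj_on ((*v) (transpose W)) (vec.span (rows X))"
    proof (rule inj_onI)
      fix x y assume "transpose W *v x = transpose W *v y"
      then have "(x v* W) v* V = (y v* W) v* V"
        by simp
      then show "x = y"
        by (simp add: vector_matrix_mul_assoc WV)
    qed
  qed
  ultimately show ?thesis
    unfolding row_rank_def_gen by simp
qed

lemma rank_diagm: "rank (diagm d :: complex^'n^'n) = card {i. d i \<noteq> 0}"
proof -
  define E :: "(complex^'n) set" where "E = (\<lambda>i. axis i 1) ` {i. d i \<noteq> 0}"
  have row: "row i (diagm d :: complex^'n^'n) = complex_of_real (d i) *s axis i 1" for i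
    by (simp add: row_def diagm_def axis_def vec_eq_iff)
  have "vec.span (rows (diagm d :: complex^'n^'n)) = vec.span E"
    unfolding vec.span_eq
  proof
    have "complex_of_real (d i) *s axis i 1 \<in> vec.span E" for i
      using vec.span_scale[OF vec.span_base[of "axis i 1" E]]
      by (cases "d i = 0") (auto simp: E_def vec.span_zero)
    then show "rows (diagm d :: complex^'n^'n) \<subseteq> vec.span E"
      by (auto simp: rows_def row)
    have "row i (diagm d :: complex^'n^'n) \<in> rows (diagm d)" for i
      by (auto simp: rows_def)
    then have scaled: "(1 / complex_of_real (d i)) *s row i (diagm d :: complex^'n^'n)
        \<in> vec.span (rows (diagm d))" for i
      by (intro vec.span_scale vec.span_base)
    have "axis i 1 \<in> vec.span (rows (diagm d :: complex^'n^'n))" if "d i \<noteq> 0" for i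
      using scaled[of i] that by (simp add: row)
    then show "E \<subseteq> vec.span (rows (diagm d :: complex^'n^'n))"
      by (auto simp: E_def)
  qed
  then have "rank (diagm d :: complex^'n^'n) = vec.dim E"
    by (metis row_rank_def_gen vec.dim_span)
  also have "\<dots> = card E"
    by (rule vec.dim_eq_card_independent,
        rule vec.independent_mono[OF independent_cart_basis]) (auto simp: E_def cart_basis_def)
  also have "card E = card {i. d i \<noteq> 0}"
    unfolding E_def by (rule card_image) (auto simp: inj_on_def axis_eq_axis)
  finally show ?thesis .
qed

lemma rank_unitary_conj_diagm:
  assumes "unitary U"
  shows "rank (U ** diagm d ** adj U) = card {i. d i \<noteq> 0}"
proof -
  have "rank ((U ** diagm d) ** adj U) = rank (U ** diagm d)"
    using assms by (simp add: unitary_def rank_mult_right_invertible)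
  also have "\<dots> = rank (diagm d)"
    using assms by (simp add: unitary_def rank_mult_left_invertible)
  finally show ?thesis
    by (simp add: rank_diagm)
qed

lemma pos_less_card_UNIV: "pos (i::'n::{finite,wellorder}) < card (UNIV :: 'n set)"
  unfolding pos_def by (rule psubset_card_mono) auto

lemma pos_less_card_nonzero_iff:
  fixes a :: "'n::{finite,wellorder} \<Rightarrow> real"
  assumes nonneg: "\<forall>i. 0 \<le> a i" and antimono: "\<forall>i j. i \<le> j \<longrightarrow> a j \<le> a i"
  shows "pos i < card {i. a i \<noteq> 0} \<longleftrightarrow> 0 < a i"
proof
  assume "pos i < card {i. a i \<noteq> 0}"
  then have "\<not> {i. a i \<noteq> 0} \<subseteq> {j. j < i}"
    unfolding pos_def by (meson card_mono finite leD)
  then obtain j where j: "a j \<noteq> 0" "\<not> j < i"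
    by blast
  have "0 < a j"
    using nonneg j(1) by (simp add: less_le)
  moreover have "a j \<le> a i"
    using antimono j(2) by (simp add: not_less)
  ultimately show "0 < a i"
    by simp
next
  assume "0 < a i"
  moreover have "a i \<le> a j" if "j < i" for j
    using antimono that by (simp add: less_imp_le)
  ultimately have "{j. j < i} \<subset> {i. a i \<noteq> 0}"
    by force
  then show "pos i < card {i. a i \<noteq> 0}"
    unfolding pos_def by (simp add: psubset_card_mono)
qed

lemma inverse_plus_mult_powr_half:
  assumes "0 < (a::real)"
  shows "1 / a powr (-1/2) + a * a powr (-1/2) = 2 * sqrt a"
  using assms by (simp add: powr_minus_divide powr_half_sqrt real_div_sqrt)

lemma Lag_unitary_conj_diagm:
  assumes U: "unitary U" and A: "Amat h K lam mu = U ** diagm a ** adj U"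
    and tau: "\<forall>i. tau i \<noteq> 0"
  shows "Lag h K Gam P lam mu (U ** diagm tau ** adj U)
    = ereal ((\<Sum>i\<in>UNIV. 1 / tau i + a i * tau i) + Gam * (\<Sum>k<K. mu k) - lam * P)"
proof -
  note inv = matrix_inv_unique[OF unitary_conj_diagm_inverse[OF U tau]]
  have "Re (trace (matrix_inv (U ** diagm tau ** adj U))) = (\<Sum>i\<in>UNIV. 1 / tau i)"
    by (simp add: inv(2) trace_unitary_conj[OF U] trace_diagm)
  moreover have "Re (trace (Amat h K lam mu ** (U ** diagm tau ** adj U))) = (\<Sum>i\<in>UNIV. a i * tau i)"
    by (simp add: A unitary_conj_mult[OF U] diagm_mult trace_unitary_conj[OF U] trace_diagm)
  ultimately show ?thesis
    using inv(1) by (simp add: Lag_def sum.distrib)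
qed

lemma Lag_lower_bound:
  assumes U: "unitary U" and A: "Amat h K lam mu = U ** diagm a ** adj U"
    and a: "\<forall>i. 0 \<le> a i" and "psd S"
  shows "ereal (2 * (\<Sum>i\<in>UNIV. sqrt (a i)) + Gam * (\<Sum>k<K. mu k) - lam * P)
    \<le> Lag h K Gam P lam mu S"
proof (cases "invertible S")
  case True
  define B where "B = U ** diagm (\<lambda>i. sqrt (a i)) ** adj U"
  have "B ** B = Amat h K lam mu"
    using a by (simp add: A B_def unitary_conj_mult[OF U] diagm_mult)
  moreover have "Re (trace B) = (\<Sum>i\<in>UNIV. sqrt (a i))"
    by (simp add: B_def trace_unitary_conj[OF U] trace_diagm)
  ultimately have "2 * (\<Sum>i\<in>UNIV. sqrt (a i))
      \<le> Re (trace (matrix_inv S)) + Re (trace (Amat h K lam mu ** S))"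
    using two_trace_le_trace_inverse_plus[OF _ \<open>psd S\<close> True, of B]
    by (simp add: B_def adj_unitary_conj_diagm)
  then show ?thesis
    using True by (simp add: Lag_def)
qed (simp add: Lag_def)

lemma Lag_regularized_solution:
  fixes alpha :: "'n::{finite,wellorder} \<Rightarrow> real"
  assumes U: "unitary U" and A: "Amat h K lam mu = U ** diagm alpha ** adj U"
    and nonneg: "\<forall>i. 0 \<le> alpha i" and pos_iff: "\<And>i. pos i < N \<longleftrightarrow> 0 < alpha i"
    and "0 < t"
  shows "Lag h K Gam P lam mu
      (U ** diagm (\<lambda>i. if pos i < N then alpha i powr (-1/2) else t) ** adj U)
    = ereal (2 * (\<Sum>i\<in>UNIV. sqrt (alpha i)) + Gam * (\<Sum>k<K. mu k) - lam * P
        + real (card {i::'n. \<not> pos i < N}) / t)"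
proof -
  let ?tau = "\<lambda>i. if pos i < N then alpha i powr (-1/2) else t"
  have "1 / ?tau i + alpha i * ?tau i = 2 * sqrt (alpha i) + (if pos i < N then 0 else 1 / t)"
    for i
    using pos_iff[of i] nonneg[rule_format, of i] inverse_plus_mult_powr_half[of "alpha i"]
    by auto
  then have "(\<Sum>i\<in>UNIV. 1 / ?tau i + alpha i * ?tau i)
      = 2 * (\<Sum>i\<in>UNIV. sqrt (alpha i)) + real (card {i::'n. \<not> pos i < N}) / t"
    by (simp add: sum.distrib sum_distrib_left sum.If_cases Collect_neg_eq)
  moreover have "\<forall>i. ?tau i \<noteq> 0"
    using pos_iff \<open>0 < t\<close> by simp
  ultimately show ?thesis
    by (simp add: Lag_unitary_conj_diagm[OF U A])
qed

lemma tendsto_Lag_regularized_solution: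
  fixes alpha :: "'n::{finite,wellorder} \<Rightarrow> real"
  assumes U: "unitary U" and A: "Amat h K lam mu = U ** diagm alpha ** adj U"
    and nonneg: "\<forall>i. 0 \<le> alpha i" and pos_iff: "\<And>i. pos i < N \<longleftrightarrow> 0 < alpha i"
  shows "((\<lambda>t. Lag h K Gam P lam mu
      (U ** diagm (\<lambda>i. if pos i < N then alpha i powr (-1/2) else t) ** adj U))
    \<longlongrightarrow> ereal (2 * (\<Sum>i\<in>UNIV. sqrt (alpha i)) + Gam * (\<Sum>k<K. mu k) - lam * P)) at_top"
proof -
  let ?L = "2 * (\<Sum>i\<in>UNIV. sqrt (alpha i)) + Gam * (\<Sum>k<K. mu k) - lam * P"
  let ?c = "real (card {i::'n. \<not> pos i < N})"
  have "((\<lambda>t. ?L + ?c / t) \<longlongrightarrow> ?L + 0) at_top"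
    by (intro tendsto_intros tendsto_divide_0[OF tendsto_const] filterlim_at_top_imp_at_infinity
        filterlim_ident)
  then have "((\<lambda>t. ereal (?L + ?c / t)) \<longlongrightarrow> ereal ?L) at_top"
    by simp
  moreover have "eventually (\<lambda>t. ereal (?L + ?c / t) = Lag h K Gam P lam mu
      (U ** diagm (\<lambda>i. if pos i < N then alpha i powr (-1/2) else t) ** adj U)) at_top"
    using eventually_gt_at_top[of "0::real"]
    by eventually_elim (simp add: Lag_regularized_solution[OF U A nonneg pos_iff])
  ultimately show ?thesis
    by (rule Lim_transform_eventually)
qed

lemma tendsto_INF_of_lower_bound:
  fixes f :: "'a \<Rightarrow> 'b::{complete_linorder, linorder_topology}"
  assumes lower: "\<forall>x\<in>X. L \<le> f x" and in_X: "eventually (\<lambda>t. g t \<in> X) F"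
    and lim: "((\<lambda>t. f (g t)) \<longlongrightarrow> L) F" and "F \<noteq> bot"
  shows "((\<lambda>t. f (g t)) \<longlongrightarrow> (INF x\<in>X. f x)) F"
proof -
  have "(INF x\<in>X. f x) \<le> L"
    using in_X by (intro tendsto_le[OF \<open>F \<noteq> bot\<close> lim tendsto_const])
      (auto elim: eventually_mono intro: INF_lower)
  then have "(INF x\<in>X. f x) = L"
    using lower by (simp add: INF_greatest antisym)
  then show ?thesis
    using lim by simp
qed

theorem lemma3:
  fixes alpha :: "'n::{finite,wellorder} \<Rightarrow> real"
    and h :: "nat \<Rightarrow> (complex, 'n) vec"
    and K :: nat and Gam P lam :: real and mu :: "nat \<Rightarrow> real"
    and N :: nat and U :: "((complex, 'n) vec, 'n) vec"
  assumes "Gam \<ge> 0" and "P > 0" and "lam \<ge> 0" and "\<forall>k<K. mu k \<ge> 0"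
    and "psd (Amat h K lam mu)"
    and "N = rank (Amat h K lam mu)"
    and "unitary U"
    and "Amat h K lam mu = U ** diagm alpha ** adj U"
    and "\<forall>i j. i \<le> j \<longrightarrow> alpha j \<le> alpha i"
  shows "(N = card (UNIV :: 'n set) \<longrightarrow>
            (let S0 = U ** diagm (\<lambda>i. alpha i powr (-1/2)) ** adj U in
              psd S0 \<and> (\<forall>S. psd S \<longrightarrow> Lag h K Gam P lam mu S0 \<le> Lag h K Gam P lam mu S)))
       \<and> ((\<lambda>t. Lag h K Gam P lam mu
               (U ** diagm (\<lambda>i. if pos i < N then alpha i powr (-1/2) else t) ** adj U))
            \<longlongrightarrow> (INF S\<in>{S. psd S}. Lag h K Gam P lam mu S)) at_top"
proof -
  note U = \<open>unitary U\<close> and A = \<open>Amat h K lam mu = U ** diagm alpha ** adj U\<close>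
  let ?S = "\<lambda>t. U ** diagm (\<lambda>i. if pos i < N then alpha i powr (-1/2) else t) ** adj U"
  let ?L = "2 * (\<Sum>i\<in>UNIV. sqrt (alpha i)) + Gam * (\<Sum>k<K. mu k) - lam * P"
  have nonneg: "\<forall>i. 0 \<le> alpha i"
    using \<open>psd (Amat h K lam mu)\<close> by (simp add: A psd_unitary_conj_diagm_iff[OF U])
  have "N = card {i. alpha i \<noteq> 0}"
    using \<open>N = rank (Amat h K lam mu)\<close> by (simp add: A rank_unitary_conj_diagm[OF U])
  then have pos_iff: "pos i < N \<longleftrightarrow> 0 < alpha i" for i
    using pos_less_card_nonzero_iff[OF nonneg \<open>\<forall>i j. i \<le> j \<longrightarrow> alpha j \<le> alpha i\<close>] by simp
  have psd_S: "psd (?S t)" if "0 < t" for t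
    using nonneg that by (simp add: psd_unitary_conj_diagm_iff[OF U])
  have lower: "\<forall>S\<in>{S. psd S}. ereal ?L \<le> Lag h K Gam P lam mu S"
    using Lag_lower_bound[OF U A nonneg] by blast
  have "eventually (\<lambda>t. ?S t \<in> {S. psd S}) at_top"
    using eventually_gt_at_top[of "0::real"] by eventually_elim (simp add: psd_S)
  then have "((\<lambda>t. Lag h K Gam P lam mu (?S t))
      \<longlongrightarrow> (INF S\<in>{S. psd S}. Lag h K Gam P lam mu S)) at_top"
    using tendsto_INF_of_lower_bound[OF lower _ tendsto_Lag_regularized_solution[OF U A nonneg pos_iff]]
    by simp
  moreover have "let S0 = U ** diagm (\<lambda>i. alpha i powr (-1/2)) ** adj U in
      psd S0 \<and> (\<forall>S. psd S \<longrightarrow> Lag h K Gam P lam mu S0 \<le> Lag h K Gam P lam mu S)"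
    if "N = card (UNIV :: 'n set)"
  proof -
    have "pos i < N" for i :: 'n
      using that pos_less_card_UNIV by simp
    then have "U ** diagm (\<lambda>i. alpha i powr (-1/2)) ** adj U = ?S 1"
      and "Lag h K Gam P lam mu (?S 1) = ereal ?L"
      using Lag_regularized_solution[OF U A nonneg pos_iff, of 1] by simp_all
    then show ?thesis
      using psd_S[of 1] lower by (simp add: Let_def)
  qed
  ultimately show ?thesis
    by blast
qed

end
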